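(* Let $G$ be a triangulation and $v_0\in V(G)$. For every integer $k\ge 0$, the extended degree-bounded ball satisfies $|V(\bar B_k^8(v_0))|<5^k\, d(v_0)$.
   Context: A triangulation is a simple graph (with at least $4$ vertices) embedded in the sphere all of whose faces are triangles. For a vertex $v_0$ and integer $k\ge0$: $V_1$ is the set of vertices $v_1$ for which there is a path $P$ from $v_0$ to $v_1$ of length at most $k$ all of whose vertices other than $v_0$ have degree at most $8$; $B_k^8(v_0)=G[V_1]$ is the degree-bounded ball. $V_2$ is the set of vertices $v\ne v_0$ of degree at least $9$ for which there is a path from $v_0$ to $v$ of length at most $k$ whose internal vertices all have degree at most $8$. The extended degree-bounded ball is $\bar B_k^8(v_0)=G[V_1\cup V_2]$. *)

theory Defs
  imports Main
begin

text \<open>An embedding in the sphere is represented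
combinatorially by a rotation system (Heffter--Edmonds): for every vertex u a
cyclic permutation r u of its neighbours. Faces are the orbits of the
face-tracing permutation on darts; the embedding is in the sphere iff the
graph is connected and V - E + F = 2.\<close>

definition nbrs :: "'a set \<Rightarrow> ('a \<Rightarrow> 'a \<Rightarrow> bool) \<Rightarrow> 'a \<Rightarrow> 'a set" where
  "nbrs V E u = {v \<in> V. E u v}"

definition deg :: "'a set \<Rightarrow> ('a \<Rightarrow> 'a \<Rightarrow> bool) \<Rightarrow> 'a \<Rightarrow> nat" where
  "deg V E u = card (nbrs V E u)"

definition darts :: "'a set \<Rightarrow> ('a \<Rightarrow> 'a \<Rightarrow> bool) \<Rightarrow> ('a \<times> 'a) set" where
  "darts V E = {(u, v). u \<in> V \<and> v \<in> V \<and> E u v}"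

definition edges :: "'a set \<Rightarrow> ('a \<Rightarrow> 'a \<Rightarrow> bool) \<Rightarrow> 'a set set" where
  "edges V E = {{u, v} | u v. u \<in> V \<and> v \<in> V \<and> E u v}"

definition simple_graph :: "'a set \<Rightarrow> ('a \<Rightarrow> 'a \<Rightarrow> bool) \<Rightarrow> bool" where
  "simple_graph V E \<longleftrightarrow> finite V \<and> (\<forall>u v. E u v \<longrightarrow> u \<in> V \<and> v \<in> V)
     \<and> (\<forall>u. \<not> E u u) \<and> (\<forall>u v. E u v \<longrightarrow> E v u)"

definition connected_graph :: "'a set \<Rightarrow> ('a \<Rightarrow> 'a \<Rightarrow> bool) \<Rightarrow> bool" where
  "connected_graph V E \<longleftrightarrow> (\<forall>u \<in> V. \<forall>v \<in> V. E\<^sup>*\<^sup>* u v)"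

definition rotation_system :: "'a set \<Rightarrow> ('a \<Rightarrow> 'a \<Rightarrow> bool) \<Rightarrow> ('a \<Rightarrow> 'a \<Rightarrow> 'a) \<Rightarrow> bool" where
  "rotation_system V E r \<longleftrightarrow>
     (\<forall>u \<in> V. bij_betw (r u) (nbrs V E u) (nbrs V E u)
        \<and> (\<forall>v \<in> nbrs V E u. \<forall>w \<in> nbrs V E u. \<exists>n. (r u ^^ n) v = w))"

definition face_perm :: "('a \<Rightarrow> 'a \<Rightarrow> 'a) \<Rightarrow> 'a \<times> 'a \<Rightarrow> 'a \<times> 'a" where
  "face_perm r d = (snd d, r (snd d) (fst d))"

definition faces :: "'a set \<Rightarrow> ('a \<Rightarrow> 'a \<Rightarrow> bool) \<Rightarrow> ('a \<Rightarrow> 'a \<Rightarrow> 'a) \<Rightarrow> ('a \<times> 'a) set set" where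
  "faces V E r = (\<lambda>d. {(face_perm r ^^ n) d | n. True}) ` darts V E"

definition triangulation :: "'a set \<Rightarrow> ('a \<Rightarrow> 'a \<Rightarrow> bool) \<Rightarrow> bool" where
  "triangulation V E \<longleftrightarrow> simple_graph V E \<and> card V \<ge> 4 \<and> connected_graph V E \<and>
     (\<exists>r. rotation_system V E r \<and> (\<forall>f \<in> faces V E r. card f = 3)
        \<and> int (card V) - int (card (edges V E)) + int (card (faces V E r)) = 2)"

text \<open>A path: list of distinct vertices, consecutive ones adjacent; its length is
the number of edges, i.e. length xs - 1.\<close>
definition is_path :: "'a set \<Rightarrow> ('a \<Rightarrow> 'a \<Rightarrow> bool) \<Rightarrow> 'a list \<Rightarrow> bool" where
  "is_path V E xs \<longleftrightarrow> xs \<noteq> [] \<and> distinct xs \<and> set xs \<subseteq> V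
     \<and> (\<forall>i. Suc i < length xs \<longrightarrow> E (xs ! i) (xs ! Suc i))"

definition ball_V1 :: "'a set \<Rightarrow> ('a \<Rightarrow> 'a \<Rightarrow> bool) \<Rightarrow> nat \<Rightarrow> 'a \<Rightarrow> 'a set" where
  "ball_V1 V E k v0 = {v1. \<exists>xs. is_path V E xs \<and> hd xs = v0 \<and> last xs = v1
      \<and> length xs - 1 \<le> k \<and> (\<forall>x \<in> set (tl xs). deg V E x \<le> 8)}"

definition ball_V2 :: "'a set \<Rightarrow> ('a \<Rightarrow> 'a \<Rightarrow> bool) \<Rightarrow> nat \<Rightarrow> 'a \<Rightarrow> 'a set" where
  "ball_V2 V E k v0 = {v. v \<noteq> v0 \<and> deg V E v \<ge> 9 \<and> (\<exists>xs. is_path V E xs \<and> hd xs = v0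
      \<and> last xs = v \<and> length xs - 1 \<le> k \<and> (\<forall>x \<in> set (butlast (tl xs)). deg V E x \<le> 8))}"

text \<open>Vertex set of the extended degree-bounded ball (it is an induced subgraph).\<close>
definition ext_ball_vertices :: "'a set \<Rightarrow> ('a \<Rightarrow> 'a \<Rightarrow> bool) \<Rightarrow> nat \<Rightarrow> 'a \<Rightarrow> 'a set" where
  "ext_ball_vertices V E k v0 = ball_V1 V E k v0 \<union> ball_V2 V E k v0"

end

theory Submission
  imports Defs
begin

(*
  Let R_i (deg8_ball) be the set of vertices reachable from v0 by a walk of length at
  most i all of whose vertices after v0 have degree at most 8, and let Q_i
  (closed_nbhd of R_i) be R_i together with its neighbours; the extended ball of radius i + 1 lies in Q_i.  A vertex w entering R_(i+1)
  along an edge pw with p in R_i already has p and the apexes of the two triangles on pw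
  in Q_i, so it contributes at most deg w - 3 <= 5 new vertices to Q_(i+1).  As
  R_(i+1) is contained in Q_i, an induction yields 4 |Q_i| + d(v0) <= 5^(i+1) d(v0) + 4,
  and d(v0) >= 2 gives the strict bound.
*)

lemma funpow_3_eq_if_card_orbit_3:
  assumes inj: "inj_on f S" and maps: "\<And>x. x \<in> S \<Longrightarrow> f x \<in> S" and d: "d \<in> S"
    and card3: "card {(f ^^ n) d | n. True} = 3"
  shows "(f ^^ 3) d = d"
proof (rule ccontr)
  assume ne3: "(f ^^ 3) d \<noteq> d"
  let ?O = "{(f ^^ n) d | n. True}"
  have fin: "finite ?O" using card3 by (intro card_ge_0_finite) simp
  have fd: "f d \<in> S" and ffd: "f (f d) \<in> S" using maps d by auto
  have ne1: "f d \<noteq> d"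
  proof
    assume h: "f d = d"
    have "(f ^^ n) d = d" for n by (induct n) (auto simp: h)
    then have "?O = {d}" by auto
    with card3 show False by simp
  qed
  have ne2: "f (f d) \<noteq> d"
  proof
    assume h: "f (f d) = d"
    have "(f ^^ n) d \<in> {d, f d}" for n by (induct n) (auto simp: h)
    then have "card ?O \<le> card {d, f d}" by (intro card_mono) auto
    also have "\<dots> \<le> 2" by (simp add: card_insert_if)
    finally show False using card3 by simp
  qed
  have "{d, f d, f (f d), f (f (f d))} \<subseteq> ?O"
    by (auto intro: exI[of _ 0] exI[of _ 1] exI[of _ 2] exI[of _ 3]
        simp: numeral_2_eq_2 numeral_3_eq_3)
  moreover have "card {d, f d, f (f d), f (f (f d))} = 4"
  proof -
    have ne12: "f d \<noteq> f (f d)" using ne1 inj_onD[OF inj _ d fd] by auto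
    have "f (f d) \<noteq> f (f (f d))" using ne12 inj_onD[OF inj _ fd ffd] by auto
    moreover have "f d \<noteq> f (f (f d))" using ne2 inj_onD[OF inj _ d ffd] by auto
    ultimately show ?thesis using ne1 ne2 ne3 ne12 by (simp add: numeral_3_eq_3)
  qed
  ultimately have "4 \<le> card ?O" using card_mono[OF fin] by metis
  with card3 show False by simp
qed

lemma simple_graphD:
  assumes "simple_graph V E"
  shows "finite V" and "E u v \<Longrightarrow> u \<in> V" and "E u v \<Longrightarrow> v \<in> V"
    and "\<not> E u u" and "E u v \<Longrightarrow> E v u"
  using assms unfolding simple_graph_def by blast+

lemma deg_le_2_if_rotation_involutive:
  assumes "rotation_system V E r" and "w \<in> V" and p: "p \<in> nbrs V E w"
    and inv: "r w (r w p) = p"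
  shows "deg V E w \<le> 2"
proof -
  have "(r w ^^ n) p \<in> {p, r w p}" for n by (induct n) (auto simp: inv)
  moreover have "\<forall>z \<in> nbrs V E w. \<exists>n. (r w ^^ n) p = z"
    using assms unfolding rotation_system_def by blast
  ultimately have "nbrs V E w \<subseteq> {p, r w p}" by (metis subsetI)
  then have "deg V E w \<le> card {p, r w p}" unfolding deg_def by (intro card_mono) auto
  also have "\<dots> \<le> 2" by (simp add: card_insert_if)
  finally show ?thesis .
qed

lemma connected_graph_ex_nbr:
  assumes "connected_graph V E" and "u \<in> V" and "v \<in> V" and "u \<noteq> v"
  obtains w where "E u w"
proof -
  have "E\<^sup>*\<^sup>* u v" using assms unfolding connected_graph_def by blast
  with \<open>u \<noteq> v\<close> show thesis using that by (metis converse_rtranclpE)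
qed

primrec deg8_ball :: "'a set \<Rightarrow> ('a \<Rightarrow> 'a \<Rightarrow> bool) \<Rightarrow> 'a \<Rightarrow> nat \<Rightarrow> 'a set" where
  "deg8_ball V E v0 0 = {v0}"
| "deg8_ball V E v0 (Suc i) =
     deg8_ball V E v0 i \<union> {v \<in> V. deg V E v \<le> 8 \<and> (\<exists>u \<in> deg8_ball V E v0 i. E u v)}"

definition closed_nbhd :: "'a set \<Rightarrow> ('a \<Rightarrow> 'a \<Rightarrow> bool) \<Rightarrow> 'a set \<Rightarrow> 'a set" where
  "closed_nbhd V E S = S \<union> (\<Union>u \<in> S. nbrs V E u)"

lemma deg8_ball_mono: "i \<le> j \<Longrightarrow> deg8_ball V E v0 i \<subseteq> deg8_ball V E v0 j"
  by (induct j) (auto simp: le_Suc_eq)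

lemma deg8_ball_subset: "v0 \<in> V \<Longrightarrow> deg8_ball V E v0 i \<subseteq> V"
  by (induct i) auto

lemma deg8_ball_Suc_subset: "deg8_ball V E v0 (Suc i) \<subseteq> closed_nbhd V E (deg8_ball V E v0 i)"
  by (auto simp: closed_nbhd_def nbrs_def)

lemma finite_closed_nbhd: "finite V \<Longrightarrow> S \<subseteq> V \<Longrightarrow> finite (closed_nbhd V E S)"
  unfolding closed_nbhd_def nbrs_def by (auto intro: finite_subset)

lemma path_nth_in_deg8_ball:
  assumes path: "is_path V E xs" and "hd xs = v0" and "j < length xs"
    and "\<forall>x \<in> set (tl (take (Suc j) xs)). deg V E x \<le> 8"
  shows "xs ! j \<in> deg8_ball V E v0 j"
  using assms(3,4)
proof (induct j)
  case 0
  then show ?case using assms(2) by (simp add: hd_conv_nth)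
next
  case (Suc j)
  have "E (xs ! j) (xs ! Suc j)" and "xs ! Suc j \<in> V"
    using path Suc.prems(1) by (auto simp: is_path_def)
  moreover have "tl (take (Suc (Suc j)) xs) = tl (take (Suc j) xs) @ [xs ! Suc j]"
    using Suc.prems(1) by (subst take_Suc_conv_app_nth) (auto simp: tl_append_if)
  ultimately show ?case using Suc by auto
qed

lemma ball_V1_subset_deg8_ball: "ball_V1 V E k v0 \<subseteq> deg8_ball V E v0 k"
proof
  fix v assume "v \<in> ball_V1 V E k v0"
  then obtain xs where path: "is_path V E xs" and "hd xs = v0" "last xs = v"
    and len: "length xs - 1 \<le> k" and "\<forall>x \<in> set (tl xs). deg V E x \<le> 8"
    unfolding ball_V1_def by blast
  moreover have "xs \<noteq> []" using path by (simp add: is_path_def)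
  ultimately have "v \<in> deg8_ball V E v0 (length xs - 1)"
    using path_nth_in_deg8_ball[OF path, of v0 "length xs - 1"] by (simp add: last_conv_nth)
  then show "v \<in> deg8_ball V E v0 k" using deg8_ball_mono[OF len, of V E v0] by blast
qed

lemma ball_V2_subset_closed_nbhd:
  "ball_V2 V E (Suc i) v0 \<subseteq> closed_nbhd V E (deg8_ball V E v0 i)"
proof
  fix v assume "v \<in> ball_V2 V E (Suc i) v0"
  then obtain xs where "v \<noteq> v0" and path: "is_path V E xs" and "hd xs = v0" "last xs = v"
    and len: "length xs - 1 \<le> Suc i" and deg: "\<forall>x \<in> set (butlast (tl xs)). deg V E x \<le> 8"
    unfolding ball_V2_def by blast
  moreover have "xs \<noteq> []" using path by (simp add: is_path_def)
  ultimately obtain j where j: "length xs = Suc (Suc j)"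
    by (metis Suc_length_conv hd_Cons_tl last_ConsL length_greater_0_conv not0_implies_Suc)
  have "take (Suc j) xs = butlast xs" using j by (simp add: butlast_conv_take)
  then have "xs ! j \<in> deg8_ball V E v0 j"
    using path_nth_in_deg8_ball[OF path \<open>hd xs = v0\<close>, of j] j deg by (simp add: butlast_tl)
  then have u: "xs ! j \<in> deg8_ball V E v0 i" using deg8_ball_mono[of j i V E v0] j len by auto
  have "E (xs ! j) v" "v \<in> V"
    using path j \<open>last xs = v\<close> by (auto simp: is_path_def last_conv_nth)
  then show "v \<in> closed_nbhd V E (deg8_ball V E v0 i)"
    using u by (auto simp: closed_nbhd_def nbrs_def)
qed

lemma ext_ball_vertices_0_subset: "ext_ball_vertices V E 0 v0 \<subseteq> {v0}"
proof -
  have "ball_V2 V E 0 v0 = {}"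
    by (auto simp: ball_V2_def is_path_def length_Suc_conv le_Suc_eq)
  then show ?thesis using ball_V1_subset_deg8_ball[of V E 0 v0] by (simp add: ext_ball_vertices_def)
qed

lemma ext_ball_vertices_Suc_subset:
  "ext_ball_vertices V E (Suc i) v0 \<subseteq> closed_nbhd V E (deg8_ball V E v0 i)"
  using ball_V1_subset_deg8_ball[of V E "Suc i" v0] deg8_ball_Suc_subset[of V E v0 i]
    ball_V2_subset_closed_nbhd[of V E i v0]
  unfolding ext_ball_vertices_def by blast

locale triangulated =
  fixes V :: "'a set" and E :: "'a \<Rightarrow> 'a \<Rightarrow> bool" and r :: "'a \<Rightarrow> 'a \<Rightarrow> 'a"
  assumes simple: "simple_graph V E"
    and rotation: "rotation_system V E r"
    and triangular_faces: "\<forall>f \<in> faces V E r. card f = 3"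
begin

lemma finite_vertices: "finite V"
  using simple_graphD(1)[OF simple] .

lemma adj_sym: "E u v \<Longrightarrow> E v u"
  using simple_graphD(5)[OF simple] .

lemma nbrs_iff: "v \<in> nbrs V E u \<longleftrightarrow> E u v"
  using simple_graphD(3)[OF simple] by (auto simp: nbrs_def)

lemma rotation_bij: "u \<in> V \<Longrightarrow> bij_betw (r u) (nbrs V E u) (nbrs V E u)"
  using rotation unfolding rotation_system_def by blast

lemma rotation_nbr: "E u v \<Longrightarrow> E u (r u v)"
  using rotation_bij simple_graphD(2)[OF simple] by (metis bij_betwE nbrs_iff)

lemma face_perm_darts: "d \<in> darts V E \<Longrightarrow> face_perm r d \<in> darts V E"
proof (cases d)
  case (Pair u v)
  moreover assume "d \<in> darts V E"
  ultimately have "E v (r v u)" using rotation_nbr adj_sym by (simp add: darts_def)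
  then show ?thesis using Pair simple_graphD(2,3)[OF simple] by (simp add: darts_def face_perm_def)
qed

lemma inj_on_face_perm: "inj_on (face_perm r) (darts V E)"
proof (rule inj_onI)
  fix d d' assume "d \<in> darts V E" "d' \<in> darts V E" "face_perm r d = face_perm r d'"
  then obtain a a' b where "d = (a, b)" "d' = (a', b)" "r b a = r b a'"
    "a \<in> nbrs V E b" "a' \<in> nbrs V E b" "b \<in> V"
    by (cases d, cases d') (auto simp: face_perm_def darts_def nbrs_iff intro: adj_sym)
  then show "d = d'" using rotation_bij by (metis bij_betw_imp_inj_on inj_onD)
qed

text \<open>Tracing the triangular face of the dart \<open>(u, v)\<close>: it is
  \<open>(u, v) \<mapsto> (v, x) \<mapsto> (x, u) \<mapsto> (u, v)\<close> with \<open>x = r v u\<close>.\<close>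
lemma triangle_rotation:
  assumes "E u v"
  shows "r (r v u) v = u" and "r u (r v u) = v"
proof -
  have d: "(u, v) \<in> darts V E"
    using assms simple_graphD(2,3)[OF simple] by (simp add: darts_def)
  then have "card {(face_perm r ^^ n) (u, v) | n. True} = 3"
    using triangular_faces unfolding faces_def by blast
  then have "(face_perm r ^^ 3) (u, v) = (u, v)"
    using funpow_3_eq_if_card_orbit_3[OF inj_on_face_perm face_perm_darts d] by blast
  then show "r (r v u) v = u" and "r u (r v u) = v"
    by (auto simp: numeral_3_eq_3 face_perm_def)
qed

lemma triangle_apex_common_nbr:
  assumes "E u v"
  shows "E u (r v u)" and "E v (r v u)"
proof -
  show v: "E v (r v u)" using rotation_nbr adj_sym assms by blast
  have "E (r v u) (r (r v u) v)" using rotation_nbr adj_sym v by blast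
  then show "E u (r v u)" using triangle_rotation(1)[OF assms] adj_sym by simp
qed

lemma two_le_deg:
  assumes uv: "E u v"
  shows "2 \<le> deg V E u"
proof -
  have "{v, r u v} \<subseteq> nbrs V E u" using uv rotation_nbr by (simp add: nbrs_iff)
  then have "card {v, r u v} \<le> deg V E u"
    unfolding deg_def using finite_vertices by (intro card_mono) (auto simp: nbrs_def)
  moreover have "r u v \<noteq> v"
    using triangle_apex_common_nbr(1)[OF adj_sym[OF uv]] simple_graphD(4)[OF simple] by auto
  ultimately show ?thesis by simp
qed

lemma two_common_nbrs:
  assumes pw: "E p w" and deg: "2 < deg V E w"
  obtains x y where "x \<noteq> y" and "E w x" "E p x" "E w y" "E p y"
proof
  show "E w (r w p)" "E p (r w p)" using triangle_apex_common_nbr[OF pw] by auto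
  show "E w (r p w)" "E p (r p w)" using triangle_apex_common_nbr[OF adj_sym[OF pw]] by auto
  show "r w p \<noteq> r p w"
  proof
    assume "r w p = r p w"
    then have "r w (r w p) = p" using triangle_rotation(2)[OF adj_sym[OF pw]] by simp
    then have "deg V E w \<le> 2"
      using deg_le_2_if_rotation_involutive[OF rotation] pw simple_graphD(2,3)[OF simple]
      by (metis adj_sym nbrs_iff)
    with deg show False by simp
  qed
qed

lemma card_nbrs_Diff_le_5:
  assumes pw: "E p w" and deg: "deg V E w \<le> 8" and "p \<in> Q" and nbrs_p: "nbrs V E p \<subseteq> Q"
  shows "card (nbrs V E w - Q) \<le> 5"
proof (cases "deg V E w \<le> 2")
  case True
  have "card (nbrs V E w - Q) \<le> deg V E w"
    unfolding deg_def using finite_vertices by (intro card_mono) (auto simp: nbrs_def)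
  with True show ?thesis by simp
next
  case False
  then obtain x y where "x \<noteq> y" "E w x" "E p x" "E w y" "E p y"
    using two_common_nbrs[OF pw] by auto
  moreover have "E w p" using adj_sym[OF pw] .
  moreover have "p \<noteq> x" "p \<noteq> y" using \<open>E p x\<close> \<open>E p y\<close> simple_graphD(4)[OF simple] by auto
  ultimately have sub: "{p, x, y} \<subseteq> nbrs V E w \<inter> Q" and "card {p, x, y} = 3"
    using \<open>p \<in> Q\<close> nbrs_p by (auto simp: nbrs_iff)
  have "card (nbrs V E w - Q) \<le> card (nbrs V E w - {p, x, y})"
    using sub finite_vertices by (intro card_mono) (auto simp: nbrs_def)
  also have "\<dots> = deg V E w - 3"
    using sub \<open>card {p, x, y} = 3\<close> finite_vertices
    by (simp add: deg_def card_Diff_subset nbrs_def)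
  finally show ?thesis using deg by simp
qed

lemma card_closed_nbhd_deg8_ball_Suc_le:
  assumes "v0 \<in> V"
  shows "card (closed_nbhd V E (deg8_ball V E v0 (Suc j)))
    \<le> card (closed_nbhd V E (deg8_ball V E v0 j))
      + 5 * card (deg8_ball V E v0 (Suc j) - deg8_ball V E v0 j)"
proof -
  let ?R = "deg8_ball V E v0" and ?Q = "\<lambda>i. closed_nbhd V E (deg8_ball V E v0 i)"
  let ?L = "?R (Suc j) - ?R j"
  have fin_Q: "finite (?Q j)"
    using finite_vertices deg8_ball_subset[OF assms] by (rule finite_closed_nbhd)
  have fin_L: "finite ?L"
    using finite_vertices deg8_ball_subset[OF assms] by (meson finite_Diff finite_subset)
  have "?Q (Suc j) \<subseteq> ?Q j \<union> (\<Union>w \<in> ?L. nbrs V E w - ?Q j)"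
    using deg8_ball_Suc_subset[of V E v0 j] unfolding closed_nbhd_def by blast
  then have "card (?Q (Suc j)) \<le> card (?Q j \<union> (\<Union>w \<in> ?L. nbrs V E w - ?Q j))"
    using fin_Q fin_L finite_vertices by (intro card_mono) (auto simp: nbrs_def)
  also have "\<dots> \<le> card (?Q j) + (\<Sum>w \<in> ?L. card (nbrs V E w - ?Q j))"
    using card_Un_le card_UN_le[OF fin_L] add_left_mono order_trans by blast
  also have "(\<Sum>w \<in> ?L. card (nbrs V E w - ?Q j)) \<le> (\<Sum>w \<in> ?L. 5)"
  proof (rule sum_mono)
    fix w assume "w \<in> ?L"
    then obtain p where "p \<in> ?R j" "E p w" "deg V E w \<le> 8" by auto
    then show "card (nbrs V E w - ?Q j) \<le> 5"
      by (intro card_nbrs_Diff_le_5) (auto simp: closed_nbhd_def)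
  qed
  finally show ?thesis by simp
qed

lemma card_closed_nbhd_deg8_ball_le:
  assumes v0: "v0 \<in> V"
  shows "4 * card (closed_nbhd V E (deg8_ball V E v0 j)) + deg V E v0
    \<le> 5 ^ Suc j * deg V E v0 + 4"
proof -
  let ?R = "deg8_ball V E v0" and ?Q = "\<lambda>i. closed_nbhd V E (deg8_ball V E v0 i)"
  let ?d = "deg V E v0"
  have fin_R: "finite (?R i)" for i
    using deg8_ball_subset[OF v0] finite_vertices by (rule finite_subset)
  have fin_Q: "finite (?Q i)" for i
    using finite_vertices deg8_ball_subset[OF v0] by (rule finite_closed_nbhd)
  text \<open>The first conjunct charges at most 5 new vertices of \<open>Q\<close> to each vertex of
    \<open>R\<close> other than \<open>v0\<close>; it is what turns the additive step into the factor 5.\<close>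
  have "card (?Q j) + 4 \<le> 5 * card (?R j) + ?d \<and> 4 * card (?Q j) + ?d \<le> 5 ^ Suc j * ?d + 4"
  proof (induct j)
    case 0
    have "?Q 0 = insert v0 (nbrs V E v0)" by (simp add: closed_nbhd_def)
    then have "card (?Q 0) \<le> Suc ?d" by (simp add: deg_def card_insert_le_m1 card_insert_if)
    then show ?case by simp
  next
    case (Suc j)
    have step: "card (?Q (Suc j)) \<le> card (?Q j) + 5 * card (?R (Suc j) - ?R j)"
      by (rule card_closed_nbhd_deg8_ball_Suc_le[OF v0])
    have "?R j \<subseteq> ?R (Suc j)" by auto
    then have grow: "card (?R (Suc j)) = card (?R j) + card (?R (Suc j) - ?R j)"
      using fin_R card_Diff_subset card_mono by (metis le_add_diff_inverse)
    have "card (?R (Suc j)) \<le> card (?Q j)"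
      using card_mono[OF fin_Q deg8_ball_Suc_subset] .
    with Suc step grow show ?case by simp
  qed
  then show ?thesis by blast
qed

end

theorem lemma6p2:
  fixes V :: "'a set" and E :: "'a \<Rightarrow> 'a \<Rightarrow> bool" and v0 :: 'a and k :: nat
  assumes "triangulation V E" and "v0 \<in> V"
  shows "card (ext_ball_vertices V E k v0) < 5 ^ k * deg V E v0"
proof -
  obtain r where "triangulated V E r" and "connected_graph V E" and "4 \<le> card V"
    using assms(1) unfolding triangulation_def triangulated_def by blast
  then interpret triangulated V E r by simp
  have "\<not> V \<subseteq> {v0}" using subset_singletonD \<open>4 \<le> card V\<close> by fastforce
  then obtain u where "u \<in> V" "u \<noteq> v0" by blast
  then obtain w where "E v0 w"
    using connected_graph_ex_nbr[OF \<open>connected_graph V E\<close> assms(2)] by metis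
  then have deg: "2 \<le> deg V E v0" by (rule two_le_deg)
  show ?thesis
  proof (cases k)
    case 0
    then have "card (ext_ball_vertices V E k v0) \<le> 1"
      using card_mono[OF _ ext_ball_vertices_0_subset] by fastforce
    with 0 deg show ?thesis by simp
  next
    case (Suc i)
    then have "card (ext_ball_vertices V E k v0) \<le> card (closed_nbhd V E (deg8_ball V E v0 i))"
      using card_mono[OF finite_closed_nbhd[OF finite_vertices deg8_ball_subset[OF assms(2)]]
          ext_ball_vertices_Suc_subset]
      by simp
    moreover have "4 * card (closed_nbhd V E (deg8_ball V E v0 i)) + deg V E v0
        \<le> 5 ^ k * deg V E v0 + 4"
      using card_closed_nbhd_deg8_ball_le[OF assms(2), of i] Suc by simp
    moreover have "deg V E v0 \<le> 5 ^ k * deg V E v0" by simp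
    ultimately show ?thesis using deg by linarith
  qed
qed

end
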